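(* Under the regularity assumption below except for the gain function, suppose in addition that $\nabla^2h$ is constant on $\mathbb{R}^d$ ($h$ is a strictly convex quadratic) and $\mu_{f/h}>0$. Then the regularity assumption holds with gain function $G\equiv1$, and Bregman-SAGA with constant step size $\eta_t=1/(8L_{f/h})$ satisfies, for all $t\ge0$, $$\mathbb{E}[\psi_t]\le\Big(1-\min\big(\tfrac{1}{8\kappa_{f/h}},\tfrac{1}{2n}\big)\Big)^t\psi_0,$$ where $\kappa_{f/h}=L_{f/h}/\mu_{f/h}$.
   Context: For differentiable $\varphi$, $D_\varphi(x,y)=\varphi(x)-\varphi(y)-\nabla\varphi(y)^\top(x-y)$; $h^*$ is the convex conjugate of $h$. $f$ is $L$-relatively smooth and $\mu$-relatively strongly convex w.r.t. $h$ if $\mu D_h(x,y)\le D_f(x,y)\le LD_h(x,y)$ for all $x,y$. Regularity assumption: $f=\frac1n\sum_{i=1}^nf_i$ with each $f_i$ convex and $L_{f/h}$-relatively smooth w.r.t. $h$, $f$ is $\mu_{f/h}$-relatively strongly convex w.r.t. $h$, and $G$ is a gain function such that for all $x,y,v\in\mathbb{R}^d$ and $\lambda\in[-1,1]$: $D_{h^*}(x+\lambda v,x)\le G(x,y,v)\lambda^2D_{h^*}(y+v,y)$. The minimizer $x^\star$ of $f$ satisfies $\nabla f(x^\star)=0$. Bregman-SAGA: set $\phi_i^0=x_0$ for all $i$; at iteration $t$, pick $i_t$ uniformly in $\{1,\dots,n\}$, set $g_t=\nabla f_{i_t}(x_t)-\nabla f_{i_t}(\phi^t_{i_t})+\frac1n\sum_{j=1}^n\nabla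 f_j(\phi^t_j)$, $\nabla h(x_{t+1})=\nabla h(x_t)-\eta_tg_t$, $\phi^{t+1}_{i_t}=x_t$, $\phi^{t+1}_j=\phi^t_j$ for $j\ne i_t$. $H_t=\frac1n\sum_{i=1}^nD_{f_i}(\phi_i^t,x^\star)$ and $\psi_t=\frac{1}{\eta_t}D_h(x^\star,x_t)+\frac n2H_t$. *)

theory Defs
  imports "HOL-Analysis.Analysis"
begin

text \<open>Gradient of a real-valued function (defined where the function is differentiable).\<close>
definition grad :: "('a::real_inner \<Rightarrow> real) \<Rightarrow> 'a \<Rightarrow> 'a" where
  "grad \<phi> x = (SOME D. GDERIV \<phi> x :> D)"

definition bregman :: "('a::real_inner \<Rightarrow> real) \<Rightarrow> 'a \<Rightarrow> 'a \<Rightarrow> real" where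
  "bregman \<phi> x y = \<phi> x - \<phi> y - inner (grad \<phi> y) (x - y)"

text \<open>Convex conjugate (real-valued; finite in the situation of the theorem).\<close>
definition conjugate :: "('a::real_inner \<Rightarrow> real) \<Rightarrow> 'a \<Rightarrow> real" where
  "conjugate \<phi> y = (SUP x. inner y x - \<phi> x)"

definition rel_smooth :: "real \<Rightarrow> ('a::real_inner \<Rightarrow> real) \<Rightarrow> ('a \<Rightarrow> real) \<Rightarrow> bool" where
  "rel_smooth L f h \<longleftrightarrow> (\<forall>x y. bregman f x y \<le> L * bregman h x y)"

definition rel_strongly_convex :: "real \<Rightarrow> ('a::real_inner \<Rightarrow> real) \<Rightarrow> ('a \<Rightarrow> real) \<Rightarrow> bool" where
  "rel_strongly_convex \<mu> f h \<longleftrightarrow> (\<forall>x y. \<mu> * bregman h x y \<le> bregman f x y)"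

definition gain_function :: "('a::real_inner \<Rightarrow> real) \<Rightarrow> ('a \<Rightarrow> 'a \<Rightarrow> 'a \<Rightarrow> real) \<Rightarrow> bool" where
  "gain_function h G \<longleftrightarrow> (\<forall>x y v (s::real). -1 \<le> s \<and> s \<le> 1 \<longrightarrow>
     bregman (conjugate h) (x + s *\<^sub>R v) x \<le> G x y v * s\<^sup>2 * bregman (conjugate h) (y + v) y)"

definition avg_fun :: "nat \<Rightarrow> (nat \<Rightarrow> 'a \<Rightarrow> real) \<Rightarrow> 'a \<Rightarrow> real" where
  "avg_fun n fs = (\<lambda>x. (\<Sum>i<n. fs i x) / real n)"

text \<open>One Bregman-SAGA step with sampled index i: state = (x_t, phi^t).\<close>
definition saga_step :: "('a::real_inner \<Rightarrow> real) \<Rightarrow> (nat \<Rightarrow> 'a \<Rightarrow> real) \<Rightarrow> nat \<Rightarrow> real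
    \<Rightarrow> ('a \<times> (nat \<Rightarrow> 'a)) \<Rightarrow> nat \<Rightarrow> ('a \<times> (nat \<Rightarrow> 'a))" where
  "saga_step h fs n \<eta> st i =
    (let x = fst st; \<phi> = snd st;
         g = grad (fs i) x - grad (fs i) (\<phi> i) + (1 / real n) *\<^sub>R (\<Sum>j<n. grad (fs j) (\<phi> j));
         x' = (SOME z. grad h z = grad h x - \<eta> *\<^sub>R g)
     in (x', \<phi>(i := x)))"

definition saga_state :: "('a::real_inner \<Rightarrow> real) \<Rightarrow> (nat \<Rightarrow> 'a \<Rightarrow> real) \<Rightarrow> nat \<Rightarrow> real
    \<Rightarrow> 'a \<Rightarrow> nat list \<Rightarrow> ('a \<times> (nat \<Rightarrow> 'a))" where
  "saga_state h fs n \<eta> x0 is = foldl (saga_step h fs n \<eta>) (x0, \<lambda>_. x0) is"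

definition saga_psi :: "('a::real_inner \<Rightarrow> real) \<Rightarrow> (nat \<Rightarrow> 'a \<Rightarrow> real) \<Rightarrow> nat \<Rightarrow> real
    \<Rightarrow> 'a \<Rightarrow> ('a \<times> (nat \<Rightarrow> 'a)) \<Rightarrow> real" where
  "saga_psi h fs n \<eta> xstar st =
     (1 / \<eta>) * bregman h xstar (fst st)
     + real n / 2 * ((\<Sum>i<n. bregman (fs i) (snd st i) xstar) / real n)"

text \<open>Expectation over t i.i.d. uniform indices in {0..<n}.\<close>
definition expect_idx :: "nat \<Rightarrow> nat \<Rightarrow> (nat list \<Rightarrow> real) \<Rightarrow> real" where
  "expect_idx n t F = (\<Sum>is\<in>{is. length is = t \<and> set is \<subseteq> {..<n}}. F is) / real n ^ t"

end

theory Submission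
  imports Defs
begin

text \<open>For quadratic h every Bregman divergence of h or of its conjugate is the quadratic form of a
  fixed positive definite operator S (resp. its inverse) applied to x - y; this gives G = 1 at once.
  For SAGA, the mirror step is a preconditioned gradient step x - \<eta> S^-1 g, and the Lyapunov
  argument of SAGA goes through in the geometry of S: the estimate g is unbiased, its
  S^-1-variance is bounded via cocoercivity of the smooth f_i by 4L times the Bregman gaps
  at x and at the stored points, and strong convexity contracts the distance term.\<close>

lemma gderiv_unique:
  assumes "GDERIV f x :> D" "GDERIV f x :> D'"
  shows "D = D'"
proof -
  have "(\<lambda>h. inner h D) = (\<lambda>h. inner h D')"
    using assms unfolding gderiv_def by (rule has_derivative_unique)
  then have "inner (D - D') D = inner (D - D') D'" by metis
  then have "inner (D - D') (D - D') = 0" by (simp add: inner_diff_right)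
  then show ?thesis by simp
qed

lemma grad_eqI: "GDERIV f x :> D \<Longrightarrow> grad f x = D"
  unfolding grad_def by (metis gderiv_unique someI)

lemma gderiv_grad:
  fixes f :: "'a::euclidean_space \<Rightarrow> real"
  assumes "f differentiable (at x)"
  shows "GDERIV f x :> grad f x"
proof -
  obtain f' where d: "(f has_derivative f') (at x)"
    using assms unfolding differentiable_def by blast
  define D where "D = (\<Sum>i\<in>Basis. f' i *\<^sub>R i)"
  have "f' v = inner v D" for v
    using Linear_Algebra.linear_componentwise[OF has_derivative_linear[OF d], of v 1]
    by (simp add: D_def inner_sum_right mult.commute)
  then have "GDERIV f x :> D"
    using d unfolding gderiv_def by (metis ext)
  then show ?thesis by (simp add: grad_eqI)
qed

lemma convex_on_gderiv_above_tangent: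
  fixes f :: "'a::real_inner \<Rightarrow> real"
  assumes cv: "convex_on UNIV f" and d: "GDERIV f y :> D"
  shows "f y + inner D (x - y) \<le> f x"
proof -
  define g where "g t = f (y + t *\<^sub>R (x - y))" for t :: real
  have g_convex: "convex_on UNIV g"
  proof (rule convex_onI)
    fix t a b :: real assume "t > 0" "t < 1"
    have "y + ((1 - t) *\<^sub>R a + t *\<^sub>R b) *\<^sub>R (x - y)
        = (1 - t) *\<^sub>R (y + a *\<^sub>R (x - y)) + t *\<^sub>R (y + b *\<^sub>R (x - y))"
      by (simp add: algebra_simps)
    then show "g ((1 - t) *\<^sub>R a + t *\<^sub>R b) \<le> (1 - t) * g a + t * g b"
      unfolding g_def using convex_onD[OF cv, of t] \<open>t > 0\<close> \<open>t < 1\<close> by simp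
  qed simp
  have "((\<lambda>t. y + t *\<^sub>R (x - y)) has_derivative (\<lambda>t. t *\<^sub>R (x - y))) (at 0)"
    by (intro derivative_eq_intros) auto
  moreover have "(f has_derivative (\<lambda>h. inner h D)) (at (y + 0 *\<^sub>R (x - y)))"
    using d unfolding gderiv_def by simp
  ultimately have "(g has_derivative (\<lambda>t. inner (t *\<^sub>R (x - y)) D)) (at 0)"
    unfolding g_def using has_derivative_compose by blast
  moreover have "(*) (inner (x - y) D) = (\<lambda>t. inner (t *\<^sub>R (x - y)) D)"
    by (auto simp: fun_eq_iff)
  ultimately have "(g has_field_derivative inner (x - y) D) (at 0)"
    unfolding has_field_derivative_def by simp
  then have "g 1 - g 0 \<ge> inner (x - y) D * (1 - 0)"
    by (intro convex_on_imp_above_tangent[OF g_convex]) auto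
  then show ?thesis unfolding g_def by (simp add: inner_commute)
qed

lemma bregman_nonneg_convex:
  fixes f :: "'a::euclidean_space \<Rightarrow> real"
  assumes "convex_on UNIV f" "f differentiable (at y)"
  shows "bregman f x y \<ge> 0"
  using convex_on_gderiv_above_tangent[OF assms(1) gderiv_grad[OF assms(2)], of x]
  unfolding bregman_def by simp

lemma gderiv_quadratic:
  fixes M :: "'a::euclidean_space \<Rightarrow> 'a"
  assumes lin: "linear M" and sym: "\<And>u v. inner u (M v) = inner (M u) v"
  shows "GDERIV (\<lambda>y. (1/2) * inner (M y) y + inner p y + c) y :> M y + p"
proof -
  have dM: "(M has_derivative M) (at y)"
    using lin by (simp add: linear_conv_bounded_linear bounded_linear_imp_has_derivative)
  have "((\<lambda>y. (1/2) * inner (M y) y + inner p y + c) has_derivative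
         (\<lambda>h. (1/2) * (inner (M y) h + inner (M h) y) + inner p h + 0)) (at y)"
    by (intro has_derivative_add has_derivative_mult_right has_derivative_const
        has_derivative_inner[OF dM has_derivative_id, simplified]
        bounded_linear_imp_has_derivative bounded_linear_inner_right)
  moreover have "(\<lambda>h. (1/2) * (inner (M y) h + inner (M h) y) + inner p h) = (\<lambda>h. inner h (M y + p))"
    using sym by (auto simp: fun_eq_iff inner_add_right inner_commute)
  ultimately show ?thesis unfolding gderiv_def by simp
qed

lemma bregman_quadratic:
  fixes M :: "'a::euclidean_space \<Rightarrow> 'a"
  assumes lin: "linear M" and sym: "\<And>u v. inner u (M v) = inner (M u) v"
  shows "bregman (\<lambda>y. (1/2) * inner (M y) y + inner p y + c) x y = (1/2) * inner (M (x - y)) (x - y)"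
proof -
  have "inner (M x) y = inner (M y) x" using sym[of x y] by (simp add: inner_commute)
  then show ?thesis
    unfolding bregman_def grad_eqI[OF gderiv_quadratic[OF lin sym]]
    by (simp add: linear_diff[OF lin] inner_commute algebra_simps)
qed

lemma gderiv_avg_fun:
  fixes fs :: "nat \<Rightarrow> 'a::euclidean_space \<Rightarrow> real"
  assumes "\<And>i. i < n \<Longrightarrow> GDERIV (fs i) x :> g i"
  shows "GDERIV (avg_fun n fs) x :> (1 / real n) *\<^sub>R (\<Sum>i<n. g i)"
proof -
  have "((\<lambda>x. (1 / real n) * (\<Sum>i<n. fs i x)) has_derivative
          (\<lambda>h. (1 / real n) * (\<Sum>i<n. inner h (g i)))) (at x)"
    using assms unfolding gderiv_def by (intro has_derivative_mult_right has_derivative_sum) auto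
  moreover have "avg_fun n fs = (\<lambda>x. (1 / real n) * (\<Sum>i<n. fs i x))"
    unfolding avg_fun_def by auto
  moreover have "(\<lambda>h. (1 / real n) * (\<Sum>i<n. inner h (g i)))
      = (\<lambda>h. inner h ((1 / real n) *\<^sub>R (\<Sum>i<n. g i)))"
    by (auto simp: inner_sum_right)
  ultimately show ?thesis unfolding gderiv_def by simp
qed

lemma bregman_avg_fun:
  fixes fs :: "nat \<Rightarrow> 'a::euclidean_space \<Rightarrow> real"
  assumes "\<And>i. i < n \<Longrightarrow> fs i differentiable (at y)"
  shows "bregman (avg_fun n fs) x y = (\<Sum>i<n. bregman (fs i) x y) / real n"
proof -
  have "grad (avg_fun n fs) y = (1 / real n) *\<^sub>R (\<Sum>i<n. grad (fs i) y)"
    by (intro grad_eqI gderiv_avg_fun gderiv_grad assms)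
  then show ?thesis
    unfolding bregman_def by (simp add: avg_fun_def sum_subtractf inner_sum_left diff_divide_distrib)
qed

lemma sum_lists_Suc:
  "(\<Sum>is\<in>{is. length is = Suc t \<and> set is \<subseteq> {..<n}}. F is)
   = (\<Sum>is\<in>{is. length is = t \<and> set is \<subseteq> {..<n}}. \<Sum>i<n. F (is @ [i]))"
proof -
  let ?snoc = "\<lambda>(is, i). is @ [i]"
  have "{is. length is = Suc t \<and> set is \<subseteq> {..<n}}
      = ?snoc ` ({is. length is = t \<and> set is \<subseteq> {..<n}} \<times> {..<n})"
  proof (intro set_eqI iffI)
    fix xs assume "xs \<in> {is. length is = Suc t \<and> set is \<subseteq> {..<n}}"
    then have l: "length xs = Suc t" and s: "set xs \<subseteq> {..<n}" by auto
    then obtain ys y where xs: "xs = ys @ [y]" by (metis length_Suc_conv_rev)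
    show "xs \<in> ?snoc ` ({is. length is = t \<and> set is \<subseteq> {..<n}} \<times> {..<n})"
      using l s unfolding xs by (auto intro!: image_eqI[where x = "(ys, y)"])
  qed auto
  moreover have "inj_on ?snoc ({is. length is = t \<and> set is \<subseteq> {..<n}} \<times> {..<n})"
    by (auto simp: inj_on_def)
  ultimately show ?thesis
    by (simp add: sum.reindex sum.cartesian_product case_prod_unfold)
qed

lemma expect_idx_foldl_le:
  fixes P :: "'s \<Rightarrow> real"
  assumes n: "n > 0" and r: "r \<ge> 0"
    and step: "\<And>s. (\<Sum>i<n. P (f s i)) / real n \<le> r * P s"
  shows "expect_idx n t (\<lambda>is. P (foldl f s0 is)) \<le> r ^ t * P s0"
proof (induction t)
  case 0
  have "{is. length is = 0 \<and> set is \<subseteq> {..<n}} = {[]}" by auto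
  then show ?case unfolding expect_idx_def by simp
next
  case (Suc t)
  let ?L = "{is. length is = t \<and> set is \<subseteq> {..<n}}"
  have "expect_idx n (Suc t) (\<lambda>is. P (foldl f s0 is))
      = (\<Sum>is\<in>?L. (\<Sum>i<n. P (f (foldl f s0 is) i)) / real n) / real n ^ t"
    unfolding expect_idx_def sum_lists_Suc using n
    by (simp add: sum_divide_distrib[symmetric] field_simps)
  also have "\<dots> \<le> (\<Sum>is\<in>?L. r * P (foldl f s0 is)) / real n ^ t"
    by (intro divide_right_mono sum_mono step) simp
  also have "\<dots> = r * expect_idx n t (\<lambda>is. P (foldl f s0 is))"
    unfolding expect_idx_def by (simp add: sum_distrib_left)
  also have "\<dots> \<le> r * (r ^ t * P s0)" using Suc r by (rule mult_left_mono)
  finally show ?case by simp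
qed

locale pos_def_sym =
  fixes S :: "'a::euclidean_space \<Rightarrow> 'a"
  assumes linear: "linear S" and sym: "\<And>u v. inner u (S v) = inner (S u) v"
    and pos: "\<And>v. v \<noteq> 0 \<Longrightarrow> inner v (S v) > 0"
begin

definition qform :: "'a \<Rightarrow> real" where "qform v = inner v (S v)"

lemma qform_nonneg: "qform v \<ge> 0"
  unfolding qform_def using pos[of v] by (cases "v = 0") (auto simp: linear_0[OF linear])

lemma qform_add: "qform (a + b) = qform a + 2 * inner a (S b) + qform b"
  unfolding qform_def using sym[of b a]
  by (simp add: linear_add[OF linear] inner_add_left inner_add_right inner_commute)

lemma qform_diff: "qform (a - b) = qform a - 2 * inner a (S b) + qform b"
  unfolding qform_def using sym[of b a]
  by (simp add: linear_diff[OF linear] inner_diff_left inner_diff_right inner_commute)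

lemma qform_scale: "qform (r *\<^sub>R a) = r\<^sup>2 * qform a"
  unfolding qform_def by (simp add: linear_scale[OF linear] power2_eq_square)

lemma qform_add_le: "qform (a + b) \<le> 2 * qform a + 2 * qform b"
  using qform_add[of a b] qform_diff[of a b] qform_nonneg[of "a - b"] by linarith

lemma sum_qform_centered_le:
  assumes "finite I" "I \<noteq> {}"
  shows "(\<Sum>i\<in>I. qform (c i - (1 / real (card I)) *\<^sub>R (\<Sum>j\<in>I. c j))) \<le> (\<Sum>i\<in>I. qform (c i))"
proof -
  define m where "m = (1 / real (card I)) *\<^sub>R (\<Sum>j\<in>I. c j)"
  have sum_c: "(\<Sum>j\<in>I. c j) = real (card I) *\<^sub>R m"
    unfolding m_def using assms by simp
  have "(\<Sum>i\<in>I. qform (c i - m))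
      = (\<Sum>i\<in>I. qform (c i)) - 2 * inner (\<Sum>i\<in>I. c i) (S m) + real (card I) * qform m"
    by (simp add: qform_diff sum.distrib sum_subtractf inner_sum_left sum_distrib_left)
  also have "\<dots> = (\<Sum>i\<in>I. qform (c i)) - real (card I) * qform m"
    unfolding sum_c by (simp add: qform_def)
  also have "\<dots> \<le> (\<Sum>i\<in>I. qform (c i))" using qform_nonneg[of m] by simp
  finally show ?thesis unfolding m_def .
qed

lemma bij_S: "bij S"
proof -
  have "inj S"
  proof (rule injI)
    fix a b assume "S a = S b"
    then have "inner (a - b) (S (a - b)) = 0" by (simp add: linear_diff[OF linear])
    then show "a = b" using pos[of "a - b"] by (cases "a = b") auto
  qed
  then show ?thesis
    using linear_injective_imp_surjective[OF linear] by (simp add: bij_def)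
qed

definition Sinv :: "'a \<Rightarrow> 'a" where "Sinv = inv S"

lemma S_Sinv [simp]: "S (Sinv w) = w"
  unfolding Sinv_def using bij_S by (simp add: bij_is_surj surj_f_inv_f)

lemma Sinv_S [simp]: "Sinv (S v) = v"
  unfolding Sinv_def using bij_S by (simp add: bij_is_inj)

lemma S_eq_iff: "S a = S b \<longleftrightarrow> a = b"
  by (metis Sinv_S)

lemma linear_Sinv: "linear Sinv"
  by (rule linearI) (metis S_eq_iff S_Sinv linear_add[OF linear], metis S_eq_iff S_Sinv linear_scale[OF linear])

lemma sym_Sinv: "inner u (Sinv v) = inner (Sinv u) v"
  by (metis S_Sinv sym)

text \<open>The squared dual norm of S, in which gradients are measured.\<close>

definition dual_qform :: "'a \<Rightarrow> real" where "dual_qform g = qform (Sinv g)"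

lemma dual_qform_eq: "dual_qform g = inner (Sinv g) g"
  unfolding dual_qform_def qform_def by simp

lemma dual_qform_add_le: "dual_qform (a + b) \<le> 2 * dual_qform a + 2 * dual_qform b"
  unfolding dual_qform_def using qform_add_le by (simp add: linear_add[OF linear_Sinv])

lemma dual_qform_minus: "dual_qform (- v) = dual_qform v"
  unfolding dual_qform_def using qform_scale[of "-1" "Sinv v"] by (simp add: linear_neg[OF linear_Sinv])

lemma sum_dual_qform_centered_le:
  assumes "finite I" "I \<noteq> {}"
  shows "(\<Sum>i\<in>I. dual_qform (c i - (1 / real (card I)) *\<^sub>R (\<Sum>j\<in>I. c j))) \<le> (\<Sum>i\<in>I. dual_qform (c i))"
  using sum_qform_centered_le[OF assms, of "\<lambda>i. Sinv (c i)"] unfolding dual_qform_def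
  by (simp add: linear_diff[OF linear_Sinv] linear_scale[OF linear_Sinv] linear_sum[OF linear_Sinv])

text \<open>Cocoercivity: compare f with its upper quadratic model at the point
  z = x - (1/L) S^-1(\<nabla>f x - \<nabla>f y), and with its tangent at y.\<close>

lemma dual_qform_grad_diff_le:
  fixes f :: "'a \<Rightarrow> real"
  assumes cvx: "convex_on UNIV f" and diff: "\<And>x. f differentiable (at x)"
    and smooth: "\<And>x y. bregman f x y \<le> L * ((1/2) * qform (x - y))" and L: "L > 0"
  shows "dual_qform (grad f x - grad f y) \<le> 2 * L * bregman f x y"
proof -
  define gx gy where "gx = grad f x" and "gy = grad f y"
  define d where "d = gx - gy"
  define z where "z = x - (1 / L) *\<^sub>R Sinv d"
  define Q where "Q = dual_qform d"
  have tangent: "f y + inner gy (z - y) \<le> f z"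
    unfolding gy_def by (rule convex_on_gderiv_above_tangent[OF cvx gderiv_grad[OF diff]])
  have upper: "f z - f x - inner gx (z - x) \<le> L * ((1/2) * qform (z - x))"
    using smooth[of z x] unfolding bregman_def gx_def .
  have zx: "z - x = (- (1 / L)) *\<^sub>R Sinv d" unfolding z_def by simp
  have model: "L * ((1/2) * qform (z - x)) = Q / (2 * L)"
    unfolding zx Q_def dual_qform_def qform_scale using L by (simp add: power2_eq_square field_simps)
  have "f y + inner gy (x - y) - inner gy (Sinv d) / L \<le> f z"
    using tangent unfolding z_def by (simp add: inner_diff_right)
  moreover have "f z \<le> f x - inner gx (Sinv d) / L + Q / (2 * L)"
    using upper model unfolding zx by simp
  moreover have "Q / L = inner gx (Sinv d) / L - inner gy (Sinv d) / L"
    unfolding Q_def dual_qform_eq d_def by (simp add: inner_commute inner_diff_left diff_divide_distrib)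
  moreover have "Q / L - Q / (2 * L) = Q / (2 * L)"
    using L by (simp add: field_simps)
  ultimately have "Q / (2 * L) \<le> f x - f y - inner gy (x - y)"
    by linarith
  then show ?thesis
    unfolding Q_def d_def gx_def gy_def bregman_def using L by (simp add: field_simps)
qed

lemma conjugate_quadratic:
  "conjugate (\<lambda>x. (1/2) * inner (S x) x + inner b x + c)
     = (\<lambda>y. (1/2) * inner (Sinv y) y + inner (- Sinv b) y + ((1/2) * inner (Sinv b) b - c))"
proof
  fix y
  define w where "w = y - b"
  define h where "h x = (1/2) * inner (S x) x + inner b x + c" for x
  have val: "inner y x - h x = inner w x - (1/2) * qform x - c" for x
    unfolding h_def w_def qform_def by (simp add: inner_diff_left inner_diff_right inner_commute)
  have "conjugate h y = (1/2) * inner (Sinv w) w - c"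
    unfolding conjugate_def
  proof (rule cSup_eq_maximum)
    show "(1/2) * inner (Sinv w) w - c \<in> range (\<lambda>x. inner y x - h x)"
      by (rule range_eqI[of _ _ "Sinv w"]) (simp add: val qform_def inner_commute)
  next
    fix z assume "z \<in> range (\<lambda>x. inner y x - h x)"
    then obtain x where z: "z = inner y x - h x" by auto
    have "0 \<le> qform (x - Sinv w)" by (rule qform_nonneg)
    then show "z \<le> (1/2) * inner (Sinv w) w - c"
      unfolding z val qform_diff by (simp add: qform_def inner_commute)
  qed
  moreover have "inner (Sinv y) b = inner (Sinv b) y"
    using sym_Sinv[of y b] by (simp add: inner_commute)
  ultimately show "conjugate (\<lambda>x. (1/2) * inner (S x) x + inner b x + c) y
      = (1/2) * inner (Sinv y) y + inner (- Sinv b) y + ((1/2) * inner (Sinv b) b - c)"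
    unfolding h_def w_def by (simp add: linear_diff[OF linear_Sinv] inner_commute algebra_simps)
qed

lemma gain_function_quadratic:
  "gain_function (\<lambda>x. (1/2) * inner (S x) x + inner b x + c) (\<lambda>_ _ _. 1)"
  unfolding gain_function_def conjugate_quadratic bregman_quadratic[OF linear_Sinv sym_Sinv]
  by (auto simp: linear_scale[OF linear_Sinv] power2_eq_square)

end

locale bregman_saga = pos_def_sym S for S :: "'a::euclidean_space \<Rightarrow> 'a" +
  fixes h :: "'a \<Rightarrow> real" and fs :: "nat \<Rightarrow> 'a \<Rightarrow> real" and n :: nat
    and L \<mu> c :: real and b xstar :: 'a
  assumes h_quadratic: "h = (\<lambda>x. (1/2) * inner (S x) x + inner b x + c)"
    and n_pos: "n > 0"
    and convex: "\<And>i. i < n \<Longrightarrow> convex_on UNIV (fs i)"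
    and differentiable: "\<And>i x. i < n \<Longrightarrow> fs i differentiable (at x)"
    and smooth: "\<And>i. i < n \<Longrightarrow> rel_smooth L (fs i) h"
    and strongly_convex: "rel_strongly_convex \<mu> (avg_fun n fs) h"
    and mu_pos: "\<mu> > 0"
    and minimizer: "\<And>x. avg_fun n fs xstar \<le> avg_fun n fs x"
begin

lemma grad_h: "grad h x = S x + b"
  unfolding h_quadratic by (rule grad_eqI[OF gderiv_quadratic[OF linear sym]])

lemma bregman_h: "bregman h x y = (1/2) * qform (x - y)"
  unfolding h_quadratic bregman_quadratic[OF linear sym] qform_def by (simp add: inner_commute)

lemma smooth_qform: "i < n \<Longrightarrow> bregman (fs i) x y \<le> L * ((1/2) * qform (x - y))"
  using smooth unfolding rel_smooth_def bregman_h by blast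

lemma strongly_convex_qform: "\<mu> * ((1/2) * qform (x - y)) \<le> bregman (avg_fun n fs) x y"
  using strongly_convex unfolding rel_strongly_convex_def bregman_h by blast

lemma L_pos: "L > 0"
proof -
  obtain v :: 'a where "v \<in> Basis" using nonempty_Basis by blast
  then have q_pos: "qform v > 0" unfolding qform_def by (intro pos) auto
  have "bregman (avg_fun n fs) v 0 = (\<Sum>i<n. bregman (fs i) v 0) / real n"
    by (rule bregman_avg_fun) (rule differentiable)
  also have "\<dots> \<le> (\<Sum>i<n. L * ((1/2) * qform v)) / real n"
    by (intro divide_right_mono sum_mono) (use smooth_qform[of _ v 0] in auto)
  also have "\<dots> = L * ((1/2) * qform v)" using n_pos by simp
  finally have "\<mu> * ((1/2) * qform v) \<le> L * ((1/2) * qform v)"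
    using strongly_convex_qform[of v 0] by simp
  then have "\<mu> \<le> L" using q_pos by (simp add: mult_le_cancel_right)
  then show ?thesis using mu_pos by simp
qed

lemma bregman_fs_nonneg: "i < n \<Longrightarrow> bregman (fs i) x y \<ge> 0"
  by (rule bregman_nonneg_convex[OF convex differentiable])

lemma dual_qform_grad_fs_diff_le:
  "i < n \<Longrightarrow> dual_qform (grad (fs i) x - grad (fs i) y) \<le> 2 * L * bregman (fs i) x y"
  by (rule dual_qform_grad_diff_le[OF convex differentiable smooth_qform L_pos])

lemma sum_grad_minimizer: "(\<Sum>i<n. grad (fs i) xstar) = 0"
proof -
  let ?D = "(1 / real n) *\<^sub>R (\<Sum>i<n. grad (fs i) xstar)"
  have "GDERIV (avg_fun n fs) xstar :> ?D"
    by (intro gderiv_avg_fun gderiv_grad differentiable)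
  then have "(\<lambda>h. inner h ?D) = (\<lambda>h. 0)"
    unfolding gderiv_def
    by (rule has_derivative_local_min) (auto intro: always_eventually minimizer)
  then have "?D = 0" by (metis inner_eq_zero_iff)
  then show ?thesis using n_pos by simp
qed

lemma n_bregman_avg_fun_minimizer:
  "real n * bregman (avg_fun n fs) xstar x
     = - (\<Sum>i<n. bregman (fs i) x xstar) - inner (xstar - x) (\<Sum>i<n. grad (fs i) x)"
proof -
  have "real n * bregman (avg_fun n fs) xstar x = (\<Sum>i<n. bregman (fs i) xstar x)"
    using n_pos by (simp add: bregman_avg_fun differentiable)
  also have "\<dots> = - (\<Sum>i<n. bregman (fs i) x xstar) - inner (xstar - x) (\<Sum>i<n. grad (fs i) x)
      - inner (x - xstar) (\<Sum>i<n. grad (fs i) xstar)"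
  proof -
    have "bregman (fs i) xstar x = - bregman (fs i) x xstar - inner (xstar - x) (grad (fs i) x)
        - inner (x - xstar) (grad (fs i) xstar)" for i
      unfolding bregman_def by (simp add: inner_commute)
    then show ?thesis by (simp add: sum_subtractf sum_negf inner_sum_right)
  qed
  finally show ?thesis by (simp add: sum_grad_minimizer)
qed

definition grad_estimate :: "'a \<Rightarrow> (nat \<Rightarrow> 'a) \<Rightarrow> nat \<Rightarrow> 'a" where
  "grad_estimate x \<phi> i
     = grad (fs i) x - grad (fs i) (\<phi> i) + (1 / real n) *\<^sub>R (\<Sum>j<n. grad (fs j) (\<phi> j))"

lemma saga_step_eq:
  "saga_step h fs n \<eta> (x, \<phi>) i = (x - \<eta> *\<^sub>R Sinv (grad_estimate x \<phi> i), \<phi>(i := x))"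
proof -
  let ?g = "grad_estimate x \<phi> i"
  have "(SOME z. grad h z = grad h x - \<eta> *\<^sub>R ?g) = x - \<eta> *\<^sub>R Sinv ?g"
  proof (rule some_equality)
    show "grad h (x - \<eta> *\<^sub>R Sinv ?g) = grad h x - \<eta> *\<^sub>R ?g"
      unfolding grad_h by (simp add: linear_diff[OF linear] linear_scale[OF linear])
  next
    fix z assume "grad h z = grad h x - \<eta> *\<^sub>R ?g"
    then have "S z = S (x - \<eta> *\<^sub>R Sinv ?g)"
      unfolding grad_h by (simp add: linear_diff[OF linear] linear_scale[OF linear])
    then show "z = x - \<eta> *\<^sub>R Sinv ?g" by (simp add: S_eq_iff)
  qed
  then show ?thesis unfolding saga_step_def Let_def grad_estimate_def by simp
qed

lemma sum_grad_estimate: "(\<Sum>i<n. grad_estimate x \<phi> i) = (\<Sum>i<n. grad (fs i) x)"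
  unfolding grad_estimate_def using n_pos
  by (simp add: sum.distrib sum_subtractf sum_constant_scaleR)

text \<open>Centre the stored gradients at the minimiser (where they sum to zero) and
  use that centring does not increase the sum of squares.\<close>

lemma sum_dual_qform_grad_estimate_le:
  "(\<Sum>i<n. dual_qform (grad_estimate x \<phi> i))
     \<le> 4 * L * (\<Sum>i<n. bregman (fs i) x xstar) + 4 * L * (\<Sum>i<n. bregman (fs i) (\<phi> i) xstar)"
proof -
  define a where "a i = grad (fs i) x - grad (fs i) xstar" for i
  define d where "d i = grad (fs i) (\<phi> i) - grad (fs i) xstar" for i
  define m where "m = (1 / real (card {..<n})) *\<^sub>R (\<Sum>j<n. d j)"
  have "grad_estimate x \<phi> i = a i + - (d i - m)" for i
    unfolding grad_estimate_def a_def d_def m_def using sum_grad_minimizer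
    by (simp add: sum_subtractf)
  then have "(\<Sum>i<n. dual_qform (grad_estimate x \<phi> i))
      \<le> (\<Sum>i<n. 2 * dual_qform (a i) + 2 * dual_qform (d i - m))"
    by (intro sum_mono) (metis dual_qform_add_le dual_qform_minus)
  also have "\<dots> = 2 * (\<Sum>i<n. dual_qform (a i)) + 2 * (\<Sum>i<n. dual_qform (d i - m))"
    by (simp add: sum.distrib sum_distrib_left)
  also have "\<dots> \<le> 2 * (\<Sum>i<n. 2 * L * bregman (fs i) x xstar) + 2 * (\<Sum>i<n. 2 * L * bregman (fs i) (\<phi> i) xstar)"
  proof -
    have "(\<Sum>i<n. dual_qform (d i - m)) \<le> (\<Sum>i<n. dual_qform (d i))"
      unfolding m_def by (rule sum_dual_qform_centered_le) (use n_pos in auto)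
    moreover have "(\<Sum>i<n. dual_qform (d i)) \<le> (\<Sum>i<n. 2 * L * bregman (fs i) (\<phi> i) xstar)"
      unfolding d_def by (intro sum_mono dual_qform_grad_fs_diff_le) simp
    moreover have "(\<Sum>i<n. dual_qform (a i)) \<le> (\<Sum>i<n. 2 * L * bregman (fs i) x xstar)"
      unfolding a_def by (intro sum_mono dual_qform_grad_fs_diff_le) simp
    ultimately show ?thesis by linarith
  qed
  also have "\<dots> = 4 * L * (\<Sum>i<n. bregman (fs i) x xstar) + 4 * L * (\<Sum>i<n. bregman (fs i) (\<phi> i) xstar)"
    by (simp add: sum_distrib_left mult.assoc)
  finally show ?thesis .
qed

lemma saga_psi_eq:
  "saga_psi h fs n \<eta> xstar (x, \<phi>)
     = (1 / \<eta>) * ((1/2) * qform (xstar - x)) + (\<Sum>i<n. bregman (fs i) (\<phi> i) xstar) / 2"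
  unfolding saga_psi_def bregman_h using n_pos by simp

lemma saga_psi_step:
  assumes i: "i < n" and \<eta>: "\<eta> > 0"
  shows "saga_psi h fs n \<eta> xstar (saga_step h fs n \<eta> (x, \<phi>) i)
    = saga_psi h fs n \<eta> xstar (x, \<phi>) + inner (xstar - x) (grad_estimate x \<phi> i)
      + (\<eta> / 2) * dual_qform (grad_estimate x \<phi> i)
      + (bregman (fs i) x xstar - bregman (fs i) (\<phi> i) xstar) / 2"
proof -
  let ?g = "grad_estimate x \<phi> i"
  have q: "qform (xstar - (x - \<eta> *\<^sub>R Sinv ?g))
      = qform (xstar - x) + 2 * \<eta> * inner (xstar - x) ?g + \<eta>\<^sup>2 * dual_qform ?g"
    using qform_add[of "xstar - x" "\<eta> *\<^sub>R Sinv ?g"]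
    by (simp add: qform_scale dual_qform_def linear_scale[OF linear] algebra_simps)
  have H: "(\<Sum>j<n. bregman (fs j) ((\<phi>(i := x)) j) xstar)
      = (\<Sum>j<n. bregman (fs j) (\<phi> j) xstar) + (bregman (fs i) x xstar - bregman (fs i) (\<phi> i) xstar)"
  proof -
    have "(\<Sum>j<n. bregman (fs j) ((\<phi>(i := x)) j) xstar)
        = (\<Sum>j<n. bregman (fs j) (\<phi> j) xstar
             + (if j = i then bregman (fs i) x xstar - bregman (fs i) (\<phi> i) xstar else 0))"
      by (rule sum.cong) auto
    then show ?thesis using i by (simp add: sum.distrib)
  qed
  show ?thesis
    unfolding saga_step_eq saga_psi_eq fst_conv snd_conv q H using \<eta>
    by (simp add: field_simps power2_eq_square)
qed

lemma saga_psi_step_mean_le: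
  "(\<Sum>i<n. saga_psi h fs n (1 / (8 * L)) xstar (saga_step h fs n (1 / (8 * L)) (x, \<phi>) i)) / real n
     \<le> (1 - min (\<mu> / (8 * L)) (1 / (2 * real n))) * saga_psi h fs n (1 / (8 * L)) xstar (x, \<phi>)"
proof -
  define \<eta> where "\<eta> = 1 / (8 * L)"
  define \<rho> where "\<rho> = min (\<mu> / (8 * L)) (1 / (2 * real n))"
  define Qu where "Qu = qform (xstar - x)"
  define Hx where "Hx = (\<Sum>i<n. bregman (fs i) x xstar)"
  define H\<phi> where "H\<phi> = (\<Sum>i<n. bregman (fs i) (\<phi> i) xstar)"
  define V where "V = (\<Sum>i<n. dual_qform (grad_estimate x \<phi> i))"
  define \<Psi> where "\<Psi> = saga_psi h fs n \<eta> xstar (x, \<phi>)"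
  have \<eta>_pos: "\<eta> > 0" using L_pos by (simp add: \<eta>_def)
  have \<Psi>_eq: "\<Psi> = 4 * L * Qu + H\<phi> / 2"
    unfolding \<Psi>_def saga_psi_eq \<eta>_def Qu_def H\<phi>_def using L_pos by simp
  have "(\<Sum>i<n. saga_psi h fs n \<eta> xstar (saga_step h fs n \<eta> (x, \<phi>) i))
      = (\<Sum>i<n. \<Psi> + inner (xstar - x) (grad_estimate x \<phi> i) + (\<eta> / 2) * dual_qform (grad_estimate x \<phi> i)
          + (bregman (fs i) x xstar - bregman (fs i) (\<phi> i) xstar) / 2)"
    unfolding \<Psi>_def by (intro sum.cong refl saga_psi_step \<eta>_pos) simp
  also have "\<dots> = real n * \<Psi> + inner (xstar - x) (\<Sum>i<n. grad (fs i) x) + (\<eta> / 2) * V + (Hx - H\<phi>) / 2"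
    unfolding V_def Hx_def H\<phi>_def
    by (simp add: sum.distrib sum_subtractf sum_distrib_left sum_divide_distrib[symmetric]
        inner_sum_right[symmetric] sum_grad_estimate)
  also have "inner (xstar - x) (\<Sum>i<n. grad (fs i) x) = - real n * bregman (avg_fun n fs) xstar x - Hx"
    unfolding Hx_def using n_bregman_avg_fun_minimizer[of x] by simp
  finally have sum_eq: "(\<Sum>i<n. saga_psi h fs n \<eta> xstar (saga_step h fs n \<eta> (x, \<phi>) i))
      = real n * \<Psi> - real n * bregman (avg_fun n fs) xstar x - Hx + (\<eta> / 2) * V + (Hx - H\<phi>) / 2"
    by simp
  have contraction: "real n * (\<mu> * ((1/2) * Qu)) \<le> real n * bregman (avg_fun n fs) xstar x"
    unfolding Qu_def by (intro mult_left_mono strongly_convex_qform) simp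
  have variance: "(\<eta> / 2) * V \<le> (Hx + H\<phi>) / 4"
  proof -
    have "(\<eta> / 2) * V \<le> (\<eta> / 2) * (4 * L * Hx + 4 * L * H\<phi>)"
      unfolding V_def Hx_def H\<phi>_def
      using sum_dual_qform_grad_estimate_le \<eta>_pos by (intro mult_left_mono) auto
    also have "\<dots> = (Hx + H\<phi>) / 4" unfolding \<eta>_def using L_pos by (simp add: field_simps)
    finally show ?thesis .
  qed
  have "Hx \<ge> 0" "H\<phi> \<ge> 0"
    unfolding Hx_def H\<phi>_def by (auto intro!: sum_nonneg bregman_fs_nonneg)
  have "\<rho> * (4 * L * Qu) \<le> (\<mu> / (8 * L)) * (4 * L * Qu)"
    unfolding \<rho>_def Qu_def using L_pos qform_nonneg by (intro mult_right_mono) auto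
  also have "\<dots> = \<mu> * ((1/2) * Qu)" using L_pos by (simp add: field_simps)
  finally have "real n * (\<rho> * (4 * L * Qu)) \<le> real n * (\<mu> * ((1/2) * Qu))"
    by (intro mult_left_mono) auto
  moreover have "real n * (\<rho> * (H\<phi> / 2)) \<le> H\<phi> / 4"
  proof -
    have "real n * (\<rho> * (H\<phi> / 2)) \<le> real n * (1 / (2 * real n) * (H\<phi> / 2))"
      unfolding \<rho>_def using \<open>H\<phi> \<ge> 0\<close> by (intro mult_left_mono mult_right_mono) auto
    then show ?thesis using n_pos by simp
  qed
  moreover have "real n * ((1 - \<rho>) * \<Psi>)
      = real n * \<Psi> - real n * (\<rho> * (4 * L * Qu)) - real n * (\<rho> * (H\<phi> / 2))"
    unfolding \<Psi>_eq by (simp add: field_simps)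
  ultimately have "(\<Sum>i<n. saga_psi h fs n \<eta> xstar (saga_step h fs n \<eta> (x, \<phi>) i)) \<le> real n * ((1 - \<rho>) * \<Psi>)"
    unfolding sum_eq using contraction variance \<open>Hx \<ge> 0\<close> by argo
  then show ?thesis
    unfolding \<eta>_def \<rho>_def \<Psi>_def using n_pos by (simp add: pos_divide_le_eq mult.commute)
qed

lemma expected_saga_psi_le:
  "expect_idx n t (\<lambda>is. saga_psi h fs n (1 / (8 * L)) xstar (saga_state h fs n (1 / (8 * L)) x0 is))
     \<le> (1 - min (\<mu> / (8 * L)) (1 / (2 * real n))) ^ t * saga_psi h fs n (1 / (8 * L)) xstar (x0, \<lambda>_. x0)"
proof -
  have "min (\<mu> / (8 * L)) (1 / (2 * real n)) \<le> 1"
    using n_pos by (simp add: min.coboundedI2)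
  then show ?thesis
    unfolding saga_state_def
    by (intro expect_idx_foldl_le n_pos) (auto simp: saga_psi_step_mean_le)
qed

end

definition sym_part :: "real^'n^'n \<Rightarrow> real^'n \<Rightarrow> real^'n" where
  "sym_part A x = (1/2) *\<^sub>R (A *v x + x v* A)"

lemma inner_vector_matrix:
  fixes A :: "real^'n^'n"
  shows "inner u (v v* A) = inner v (A *v u)"
  using dot_lmul_matrix[of v A u] by (simp add: inner_commute)

lemma inner_sym_part_self:
  fixes A :: "real^'n^'n"
  shows "inner x (sym_part A x) = inner x (A *v x)"
  unfolding sym_part_def using inner_vector_matrix[of x x A] by (simp add: inner_add_right)

lemma pos_def_sym_sym_part:
  assumes "\<forall>x. x \<noteq> 0 \<longrightarrow> inner x (A *v x) > 0"
  shows "pos_def_sym (sym_part A)"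
proof (rule pos_def_sym.intro)
  show "linear (sym_part A)"
    unfolding sym_part_def
    by (rule linearI) (simp_all add: scaleR_vector_matrix_assoc algebra_simps)
  show "inner u (sym_part A v) = inner (sym_part A u) v" for u v
    unfolding sym_part_def using inner_vector_matrix[of u v A] inner_vector_matrix[of v u A]
    by (simp add: inner_add_right inner_add_left inner_commute)
  show "inner v (sym_part A v) > 0" if "v \<noteq> 0" for v
    using assms that by (simp add: inner_sym_part_self)
qed

theorem corollary1:
  fixes fs :: "nat \<Rightarrow> real^'d \<Rightarrow> real"
    and h :: "real^'d \<Rightarrow> real"
    and A :: "real^'d^'d" and b :: "real^'d" and c :: real
    and n :: nat and L \<mu> :: real and x0 xstar :: "real^'d"
  assumes n: "n \<ge> 1"
    and cvx: "\<forall>i<n. convex_on UNIV (fs i)"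
    and diff: "\<forall>i<n. \<forall>x. fs i differentiable (at x)"
    and smooth: "\<forall>i<n. rel_smooth L (fs i) h"
    and strong: "rel_strongly_convex \<mu> (avg_fun n fs) h"
    and mu_pos: "\<mu> > 0"
    and h_quad: "h = (\<lambda>x. (1/2) * inner x (A *v x) + inner b x + c)"
    and h_strict: "\<forall>x. x \<noteq> 0 \<longrightarrow> inner x (A *v x) > 0"
    and xstar_min: "\<forall>x. avg_fun n fs xstar \<le> avg_fun n fs x"
  shows "gain_function h (\<lambda>_ _ _. 1) \<and>
    (\<forall>t. expect_idx n t (\<lambda>is. saga_psi h fs n (1 / (8 * L)) xstar
                                  (saga_state h fs n (1 / (8 * L)) x0 is))
        \<le> (1 - min (1 / (8 * (L / \<mu>))) (1 / (2 * real n))) ^ t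
           * saga_psi h fs n (1 / (8 * L)) xstar (x0, \<lambda>_. x0))"
proof -
  have h_sym: "h = (\<lambda>x. (1/2) * inner (sym_part A x) x + inner b x + c)"
    unfolding h_quad by (simp add: inner_commute[of "sym_part A _"] inner_sym_part_self)
  interpret bregman_saga "sym_part A" h fs n L \<mu> c b xstar
    using pos_def_sym_sym_part[OF h_strict] n cvx diff smooth strong mu_pos h_sym xstar_min
    by (simp add: bregman_saga_def bregman_saga_axioms_def)
  have "1 / (8 * (L / \<mu>)) = \<mu> / (8 * L)" using mu_pos by simp
  then show ?thesis
    using gain_function_quadratic expected_saga_psi_le h_quadratic by auto
qed

end
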